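(* Let $n \geq 1$, $z \geq 2$, $\epsilon > 0$, and let $\mathbf{f}_1^{(0)}, \dots, \mathbf{f}_n^{(0)}$ be probability vectors in $\mathbb{R}^z$. For $t \geq 1$ define recursively $$p_{i,j}^{(t)} = \frac{\alpha_i^{(t)}}{\epsilon + D\left(\mathbf{f}_i^{(t-1)}, \mathbf{f}_j^{(t-1)}\right)}, \qquad \mathbf{f}_i^{(t)} = \sum_{j=1}^n p_{i,j}^{(t)} \mathbf{f}_j^{(t-1)},$$ where $\alpha_i^{(t)} > 0$ normalizes so that $\sum_{j} p_{i,j}^{(t)} = 1$ and $D(\mathbf{u}, \mathbf{v}) = \sqrt{\frac{1}{z}\sum_{k=1}^{z} (u_k - v_k)^2}$. Let $R$ be the quadratic scoring rule $R(\mathbf{g}, e) = 2g_e - \sum_{k=1}^z g_k^2$ for a probability vector $\mathbf{g} \in \mathbb{R}^z$ and outcome index $e \in \{1,\dots,z\}$. Then $R$ is effective with respect to the set of weights $\{p_{i,j}^{(t)} : 1 \le i,j \le n\}$ at every time $t \geq 1$; that is, for every $t \ge 1$ and all $i, j, k \in \{1,\dots,n\}$, $$p_{i,j}^{(t)} < p_{i,k}^{(t)} \iff \mathbb{E}_{\mathbf{f}_i^{(t-1)}}\left[R\left(\mathbf{f}_k^{(t-1)}\right)\right] > \mathbb{E}_{\mathbf{f}_i^{(t-1)}}\left[R\left(\mathbf{f}_j^{(t-1)}\right)\right].$$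
   Context: For probability vectors $\mathbf{f}, \mathbf{g} \in \mathbb{R}^z$, the $\mathbf{f}$-expected score of reporting $\mathbf{g}$ is $\mathbb{E}_{\mathbf{f}}[R(\mathbf{g})] = \sum_{e=1}^z f_e\, R(\mathbf{g}, e)$. *)

theory Defs
  imports "HOL-Analysis.Analysis"
begin

text \<open>Probability vectors in R^z are represented as functions nat => real,
  with coordinates indexed by {0..<z}. Agents are indexed by {0..<n}.\<close>

definition prob_vec :: "nat \<Rightarrow> (nat \<Rightarrow> real) \<Rightarrow> bool" where
  "prob_vec z g \<longleftrightarrow> (\<forall>k<z. g k \<ge> 0) \<and> (\<Sum>k<z. g k) = 1"

definition dist_D :: "nat \<Rightarrow> (nat \<Rightarrow> real) \<Rightarrow> (nat \<Rightarrow> real) \<Rightarrow> real" where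
  "dist_D z u v = sqrt ((1 / real z) * (\<Sum>k<z. (u k - v k)^2))"

definition quad_score :: "nat \<Rightarrow> (nat \<Rightarrow> real) \<Rightarrow> nat \<Rightarrow> real" where
  "quad_score z g e = 2 * g e - (\<Sum>k<z. (g k)^2)"

definition exp_score :: "nat \<Rightarrow> (nat \<Rightarrow> (nat \<Rightarrow> real) \<Rightarrow> nat \<Rightarrow> real)
    \<Rightarrow> (nat \<Rightarrow> real) \<Rightarrow> (nat \<Rightarrow> real) \<Rightarrow> real" where
  "exp_score z R f g = (\<Sum>e<z. f e * R z g e)"

definition alpha_w :: "nat \<Rightarrow> nat \<Rightarrow> real \<Rightarrow> (nat \<Rightarrow> nat \<Rightarrow> real) \<Rightarrow> nat \<Rightarrow> real" where
  "alpha_w n z eps F i = 1 / (\<Sum>j<n. 1 / (eps + dist_D z (F i) (F j)))"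

definition weight_p :: "nat \<Rightarrow> nat \<Rightarrow> real \<Rightarrow> (nat \<Rightarrow> nat \<Rightarrow> real) \<Rightarrow> nat \<Rightarrow> nat \<Rightarrow> real" where
  "weight_p n z eps F i j = alpha_w n z eps F i / (eps + dist_D z (F i) (F j))"

fun opinions :: "nat \<Rightarrow> nat \<Rightarrow> real \<Rightarrow> (nat \<Rightarrow> nat \<Rightarrow> real) \<Rightarrow> nat \<Rightarrow> nat \<Rightarrow> nat \<Rightarrow> real" where
  "opinions n z eps f0 0 = f0"
| "opinions n z eps f0 (Suc t) = (\<lambda>i k. \<Sum>j<n.
      weight_p n z eps (opinions n z eps f0 t) i j * opinions n z eps f0 t j k)"

definition p_weight :: "nat \<Rightarrow> nat \<Rightarrow> real \<Rightarrow> (nat \<Rightarrow> nat \<Rightarrow> real) \<Rightarrow> nat \<Rightarrow> nat \<Rightarrow> nat \<Rightarrow> real" where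
  "p_weight n z eps f0 t i j = weight_p n z eps (opinions n z eps f0 (t - 1)) i j"

end

theory Submission
  imports Defs
begin

(* The weights are row-stochastic, so every opinion keeps coordinate sum 1. For such f,
   expanding the quadratic score gives  E_f[R(g)] = sum_k f_k^2 - z * D(f,g)^2,  which is
   strictly decreasing in D(f,g); and p_ij = alpha_i / (eps + D(f_i,f_j)) with alpha_i > 0 is
   strictly decreasing in D(f_i,f_j) as well. So both orderings reverse that of the distances. *)

lemma dist_D_nonneg: "dist_D z u v \<ge> 0"
  unfolding dist_D_def by (simp add: sum_nonneg)

lemma sum_inverse_dist_D_pos:
  fixes F :: "nat \<Rightarrow> nat \<Rightarrow> real"
  assumes "n \<ge> 1" "eps > 0"
  shows "(\<Sum>j<n. 1 / (eps + dist_D z (F i) (F j))) > 0"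
proof (rule sum_pos)
  show "{..<n} \<noteq> {}" using assms(1) by (simp add: lessThan_empty_iff)
  show "1 / (eps + dist_D z (F i) (F j)) > 0" for j
    using assms(2) dist_D_nonneg[of z "F i" "F j"] by simp
qed simp

lemma alpha_w_pos:
  fixes F :: "nat \<Rightarrow> nat \<Rightarrow> real"
  assumes "n \<ge> 1" "eps > 0"
  shows "alpha_w n z eps F i > 0"
  using sum_inverse_dist_D_pos[OF assms] unfolding alpha_w_def by simp

lemma sum_weight_p:
  fixes F :: "nat \<Rightarrow> nat \<Rightarrow> real"
  assumes "n \<ge> 1" "eps > 0"
  shows "(\<Sum>j<n. weight_p n z eps F i j) = 1"
proof -
  have "(\<Sum>j<n. weight_p n z eps F i j)
      = alpha_w n z eps F i * (\<Sum>j<n. 1 / (eps + dist_D z (F i) (F j)))"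
    unfolding weight_p_def sum_distrib_left by (simp add: divide_inverse)
  then show ?thesis
    using sum_inverse_dist_D_pos[OF assms, where F = F and z = z and i = i]
    unfolding alpha_w_def by simp
qed

lemma sum_opinions:
  assumes "n \<ge> 1" "eps > 0" "\<forall>i<n. (\<Sum>k<z. f0 i k) = 1" "i < n"
  shows "(\<Sum>k<z. opinions n z eps f0 t i k) = 1"
  using assms(4)
proof (induction t arbitrary: i)
  case 0
  then show ?case using assms(3) by simp
next
  case (Suc t)
  let ?F = "opinions n z eps f0 t"
  have "(\<Sum>k<z. opinions n z eps f0 (Suc t) i k)
      = (\<Sum>j<n. weight_p n z eps ?F i j * (\<Sum>k<z. ?F j k))"
    by (simp add: sum.swap[of _ "{..<z}"] sum_distrib_left)
  also have "\<dots> = (\<Sum>j<n. weight_p n z eps ?F i j)"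
    using Suc.IH by simp
  also have "\<dots> = 1"
    using sum_weight_p[OF assms(1,2)] .
  finally show ?case .
qed

lemma exp_score_quad_score:
  assumes "(\<Sum>k<z. f k) = 1"
  shows "exp_score z quad_score f g = (\<Sum>k<z. (f k)^2) - real z * (dist_D z f g)^2"
proof -
  have "exp_score z quad_score f g
      = (\<Sum>e<z. 2 * (f e * g e)) - (\<Sum>e<z. f e) * (\<Sum>k<z. (g k)^2)"
    unfolding exp_score_def quad_score_def
    by (simp add: algebra_simps sum_subtractf sum_distrib_left sum_distrib_right) (rule sum.swap)
  also have "\<dots> = (\<Sum>k<z. (f k)^2) - (\<Sum>k<z. (f k - g k)^2)"
    using assms by (simp add: power2_diff sum_subtractf sum.distrib sum_distrib_left algebra_simps)
  also have "(\<Sum>k<z. (f k - g k)^2) = real z * (dist_D z f g)^2"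
    unfolding dist_D_def by (cases "z = 0") (simp_all add: sum_nonneg)
  finally show ?thesis .
qed

lemma weight_p_less_iff:
  fixes F :: "nat \<Rightarrow> nat \<Rightarrow> real"
  assumes "n \<ge> 1" "eps > 0"
  shows "weight_p n z eps F i j < weight_p n z eps F i k
    \<longleftrightarrow> dist_D z (F i) (F k) < dist_D z (F i) (F j)"
  using alpha_w_pos[OF assms] dist_D_nonneg[of z "F i" "F j"] dist_D_nonneg[of z "F i" "F k"]
    assms(2)
  unfolding weight_p_def by (simp add: divide_less_cancel frac_less2 field_simps)

theorem proposition3:
  fixes n z :: nat and eps :: real and f0 :: "nat \<Rightarrow> nat \<Rightarrow> real"
  assumes "n \<ge> 1" and "z \<ge> 2" and "eps > 0"
    and "\<forall>i<n. prob_vec z (f0 i)"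
  shows "\<forall>t\<ge>1. \<forall>i<n. \<forall>j<n. \<forall>k<n.
    (p_weight n z eps f0 t i j < p_weight n z eps f0 t i k \<longleftrightarrow>
     exp_score z quad_score (opinions n z eps f0 (t - 1) i) (opinions n z eps f0 (t - 1) k)
       > exp_score z quad_score (opinions n z eps f0 (t - 1) i) (opinions n z eps f0 (t - 1) j))"
proof (intro allI impI)
  fix t i j k :: nat
  assume "i < n"
  let ?F = "opinions n z eps f0 (t - 1)"
  let ?Dj = "dist_D z (?F i) (?F j)" and ?Dk = "dist_D z (?F i) (?F k)"
  have "(\<Sum>m<z. ?F i m) = 1"
    using sum_opinions[OF assms(1,3) _ \<open>i < n\<close>] assms(4) by (simp add: prob_vec_def)
  then have "exp_score z quad_score (?F i) (?F k) > exp_score z quad_score (?F i) (?F j)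
      \<longleftrightarrow> ?Dk\<^sup>2 < ?Dj\<^sup>2"
    using assms(2) by (simp add: exp_score_quad_score)
  also have "\<dots> \<longleftrightarrow> ?Dk < ?Dj"
    using dist_D_nonneg by (simp add: not_le[symmetric])
  finally show "p_weight n z eps f0 t i j < p_weight n z eps f0 t i k \<longleftrightarrow>
     exp_score z quad_score (?F i) (?F k) > exp_score z quad_score (?F i) (?F j)"
    unfolding p_weight_def using weight_p_less_iff[OF assms(1,3)] by simp
qed

end
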